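(* For any $I\subseteq\{1,\dots,N\}$ and any $\nu\in(0,1)$, almost surely on the event $$E_\nu(I)=\Big\{\lim_{n\to\infty}v_n(i)\,n^\nu=0\quad\forall i\in I\Big\},$$ the set $I$ is visited by $(X_n)$ only finitely many times.
   Context: Let $N\ge2$, $E=\{1,\dots,N\}$, $\alpha>1$, and let $A=(A_{i,j})_{i,j\le N}$ be a symmetric matrix with nonnegative entries, $A_{i,j}>0$ for $i\ne j$, and $\sum_j A_{i,j}$ independent of $i$. Let $(X_n)_{n\ge0}$ be a process on $E$ with arbitrary initial state such that, with $\mathcal F_n=\sigma(X_k;k\le n)$ and $Z_n(j)=\sum_{\ell=0}^n\mathbf 1_{\{X_\ell=j\}}$, $\mathbb P(X_{n+1}=j\mid\mathcal F_n)=\dfrac{A_{X_n,j}(1+Z_n(j))^\alpha}{\sum_{k\le N}A_{X_n,k}(1+Z_n(k))^\alpha}$, and let $v_n(i)=Z_n(i)/(n+1)$. *)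

theory Defs
  imports "HOL-Probability.Probability"
begin

definition occ :: "(nat \<Rightarrow> 'w \<Rightarrow> nat) \<Rightarrow> nat \<Rightarrow> nat \<Rightarrow> 'w \<Rightarrow> nat" where
  "occ X n j \<omega> = card {l. l \<le> n \<and> X l \<omega> = j}"

definition emp :: "(nat \<Rightarrow> 'w \<Rightarrow> nat) \<Rightarrow> nat \<Rightarrow> nat \<Rightarrow> 'w \<Rightarrow> real" where
  "emp X n i \<omega> = real (occ X n i \<omega>) / real (n + 1)"

definition path_occ :: "(nat \<Rightarrow> nat) \<Rightarrow> nat \<Rightarrow> nat \<Rightarrow> nat" where
  "path_occ x n j = card {l. l \<le> n \<and> x l = j}"

definition vrrw_kernel ::
  "nat \<Rightarrow> (nat \<Rightarrow> nat \<Rightarrow> real) \<Rightarrow> real \<Rightarrow> (nat \<Rightarrow> nat) \<Rightarrow> nat \<Rightarrow> nat \<Rightarrow> real" where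
  "vrrw_kernel N A \<alpha> x n j =
     A (x n) j * (1 + real (path_occ x n j)) powr \<alpha> /
     (\<Sum>k\<in>{1..N}. A (x n) k * (1 + real (path_occ x n k)) powr \<alpha>)"

end

theory Submission
  imports Defs
begin

text \<open>
  Fix m and call a path low at time k if every i \<in> I has been visited at most 2 k^(1-\<nu>)
  times up to time k; let w_n be the sum of 1 + Z_n(i) over i \<in> I. On a path that has been
  low from time m to n, some j with A(X_n,j) > 0 has been visited at least n/(2N) times, so the
  normalising sum of the kernel is of order n^\<alpha>, while the weights of the states in I are at
  most of order n^((1-\<nu>)(\<alpha>-1)) times their occupation. Hence the walk steps into I with
  probability at most r_n w_n, where r_n = C n^(-(1+\<nu>(\<alpha>-1))) is summable. Consequently
  E[w_n; low from m to n] grows at most by the factor 1 + r_n per step and stays bounded, and by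
  Markov's inequality the paths that are low from time m on while w_n is unbounded form a null
  set. On E_\<nu>(I) the path is low from some m on, and visiting I infinitely often makes w_n
  unbounded.
\<close>

lemma path_occ_0: "path_occ x 0 j = (if x 0 = j then 1 else 0)"
proof -
  have "{l. l \<le> 0 \<and> x l = j} = (if x 0 = j then {0} else {})" by auto
  then show ?thesis unfolding path_occ_def by simp
qed

lemma path_occ_Suc: "path_occ x (Suc n) j = path_occ x n j + (if x (Suc n) = j then 1 else 0)"
proof -
  have "{l. l \<le> Suc n \<and> x l = j} =
      {l. l \<le> n \<and> x l = j} \<union> (if x (Suc n) = j then {Suc n} else {})"
    by (auto simp: le_Suc_eq)
  moreover have "finite {l. l \<le> n \<and> x l = j}" by auto
  ultimately show ?thesis unfolding path_occ_def by (auto simp: card_insert_if)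
qed

lemma path_occ_cong: "\<forall>k\<le>n. x k = y k \<Longrightarrow> path_occ x n j = path_occ y n j"
  unfolding path_occ_def by (metis (mono_tags, lifting) Collect_cong)

lemma path_occ_mono: "n \<le> n' \<Longrightarrow> path_occ x n i \<le> path_occ x n' i"
  unfolding path_occ_def by (intro card_mono) auto

lemma path_occ_le: "path_occ x n i \<le> Suc n"
proof -
  have "path_occ x n i \<le> card {..n}" unfolding path_occ_def by (intro card_mono) auto
  then show ?thesis by simp
qed

lemma sum_path_occ:
  assumes "\<forall>k\<le>n. x k \<in> {1..N}"
  shows "(\<Sum>j\<in>{1..N}. path_occ x n j) = Suc n"
  using assms
proof (induction n)
  case 0
  then show ?case by (simp add: path_occ_0 sum.delta)
next
  case (Suc n)
  then show ?case by (simp add: path_occ_Suc sum.distrib sum.delta)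
qed

lemma path_occ_without_loops:
  assumes "\<forall>k<n. x (Suc k) = x k \<longrightarrow> x k \<noteq> v"
  shows "2 * path_occ x n v \<le> n + 1 + (if x n = v then 1 else 0)"
  using assms
proof (induction n)
  case 0
  then show ?case by (simp add: path_occ_0)
next
  case (Suc n)
  then have IH: "2 * path_occ x n v \<le> n + 1 + (if x n = v then 1 else 0)" by auto
  show ?case
  proof (cases "x (Suc n) = v")
    case True
    with Suc.prems have "x n \<noteq> v" by auto
    with IH True show ?thesis by (simp add: path_occ_Suc)
  next
    case False
    with IH show ?thesis by (simp add: path_occ_Suc split: if_splits)
  qed
qed

lemma path_occ_unbounded:
  assumes "infinite {n. x n = i}"
  shows "\<exists>n. K \<le> path_occ x n i"
proof -
  obtain B where B: "finite B" "card B = Suc K" "B \<subseteq> {n. x n = i}"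
    using infinite_arbitrarily_large[OF assms] by blast
  then have "B \<noteq> {}" by auto
  with B have "B \<subseteq> {l. l \<le> Max B \<and> x l = i}" by auto
  then have "card B \<le> path_occ x (Max B) i" unfolding path_occ_def by (intro card_mono) auto
  with B(2) show ?thesis by (intro exI[of _ "Max B"]) simp
qed

lemma emp_eq_path_occ: "emp X n i \<omega> = real (path_occ (\<lambda>k. X k \<omega>) n i) / real (n + 1)"
  unfolding emp_def occ_def path_occ_def by simp

lemma path_occ_eventually_small:
  assumes "finite I"
    and "\<forall>i\<in>I. (\<lambda>n. real (path_occ x n i) / real (n + 1) * real n powr \<nu>) \<longlonglongrightarrow> 0"
  obtains m where "m \<ge> 1"
    and "\<And>k i. m \<le> k \<Longrightarrow> i \<in> I \<Longrightarrow> real (path_occ x k i) \<le> 2 * real k powr (1 - \<nu>)"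
proof -
  have "\<forall>i\<in>I. eventually (\<lambda>n. real (path_occ x n i) / real (n + 1) * real n powr \<nu> < 1) sequentially"
    using assms(2) order_tendstoD(2)[OF _ zero_less_one] by blast
  then have "eventually (\<lambda>n. \<forall>i\<in>I. real (path_occ x n i) / real (n + 1) * real n powr \<nu> < 1)
      sequentially"
    by (rule eventually_ball_finite[OF assms(1)])
  then obtain m0 where m0: "\<And>n i. n \<ge> m0 \<Longrightarrow> i \<in> I \<Longrightarrow>
      real (path_occ x n i) / real (n + 1) * real n powr \<nu> < 1"
    unfolding eventually_sequentially by blast
  have "real (path_occ x k i) \<le> 2 * real k powr (1 - \<nu>)" if k: "Suc m0 \<le> k" and i: "i \<in> I" for k i
  proof -
    have kpos: "real k > 0" using k by auto
    have "real (path_occ x k i) * real k powr \<nu> < real k + 1"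
      using m0[of k i] k i by (simp add: field_simps)
    also have "\<dots> \<le> 2 * real k" using k by simp
    finally have "real (path_occ x k i) < 2 * real k / real k powr \<nu>"
      using kpos by (simp add: field_simps)
    also have "\<dots> = 2 * real k powr (1 - \<nu>)"
      using kpos by (simp add: powr_diff)
    finally show ?thesis by simp
  qed
  then show ?thesis using that[of "Suc m0"] by auto
qed


locale vrrw_matrix =
  fixes N :: nat and A :: "nat \<Rightarrow> nat \<Rightarrow> real" and \<alpha> :: real
  assumes N_ge_2: "N \<ge> 2" and alpha_gt_1: "\<alpha> > 1"
    and A_nonneg: "\<And>i j. i \<in> {1..N} \<Longrightarrow> j \<in> {1..N} \<Longrightarrow> A i j \<ge> 0"
    and A_offdiag_pos: "\<And>i j. i \<in> {1..N} \<Longrightarrow> j \<in> {1..N} \<Longrightarrow> i \<noteq> j \<Longrightarrow> A i j > 0"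
begin

definition A_min :: real where
  "A_min = Min {A i j | i j. i \<in> {1..N} \<and> j \<in> {1..N} \<and> A i j > 0}"

definition A_max :: real where
  "A_max = Max {A i j | i j. i \<in> {1..N} \<and> j \<in> {1..N}}"

definition kernel_denom :: "(nat \<Rightarrow> nat) \<Rightarrow> nat \<Rightarrow> real" where
  "kernel_denom x n = (\<Sum>k\<in>{1..N}. A (x n) k * (1 + real (path_occ x n k)) powr \<alpha>)"

lemma finite_entries: "finite {A i j | i j. i \<in> {1..N} \<and> j \<in> {1..N} \<and> P i j}"
proof -
  have "{A i j | i j. i \<in> {1..N} \<and> j \<in> {1..N} \<and> P i j} \<subseteq> case_prod A ` ({1..N} \<times> {1..N})"
    by auto
  then show ?thesis by (rule finite_subset) auto
qed

lemma A_min_pos: "A_min > 0"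
proof -
  have "A 1 2 \<in> {A i j | i j. i \<in> {1..N} \<and> j \<in> {1..N} \<and> A i j > 0}"
    using A_offdiag_pos[of 1 2] N_ge_2 by force
  then show ?thesis unfolding A_min_def using finite_entries[where P = "\<lambda>i j. A i j > 0"]
    by (subst Min_gr_iff) auto
qed

lemma A_min_le: "i \<in> {1..N} \<Longrightarrow> j \<in> {1..N} \<Longrightarrow> A i j > 0 \<Longrightarrow> A_min \<le> A i j"
  unfolding A_min_def using finite_entries[where P = "\<lambda>i j. A i j > 0"] by (intro Min_le) auto

lemma A_max_ge: "i \<in> {1..N} \<Longrightarrow> j \<in> {1..N} \<Longrightarrow> A i j \<le> A_max"
  unfolding A_max_def using finite_entries[where P = "\<lambda>_ _. True"] by (intro Max_ge) auto

lemma A_max_nonneg: "A_max \<ge> 0"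
  using A_max_ge[of 1 1] A_nonneg[of 1 1] N_ge_2 by auto

lemma kernel_denom_pos:
  assumes "x n \<in> {1..N}"
  shows "kernel_denom x n > 0"
proof -
  define k :: nat where "k = (if x n = 1 then 2 else 1)"
  have k: "k \<in> {1..N}" "k \<noteq> x n" using N_ge_2 assms by (auto simp: k_def)
  have "0 < A (x n) k * (1 + real (path_occ x n k)) powr \<alpha>"
    using A_offdiag_pos[OF assms k(1)] k by auto
  also have "\<dots> \<le> kernel_denom x n" unfolding kernel_denom_def
    using k assms A_nonneg by (intro member_le_sum) auto
  finally show ?thesis .
qed

lemma vrrw_kernel_eq:
  "vrrw_kernel N A \<alpha> x n j = A (x n) j * (1 + real (path_occ x n j)) powr \<alpha> / kernel_denom x n"
  unfolding vrrw_kernel_def kernel_denom_def by simp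

lemma sum_vrrw_kernel: "x n \<in> {1..N} \<Longrightarrow> (\<Sum>j\<in>{1..N}. vrrw_kernel N A \<alpha> x n j) = 1"
  unfolding vrrw_kernel_eq using kernel_denom_pos[of x n]
  by (simp add: sum_divide_distrib[symmetric] kernel_denom_def)

lemma vrrw_kernel_cong:
  "\<forall>k\<le>n. x k = y k \<Longrightarrow> vrrw_kernel N A \<alpha> x n j = vrrw_kernel N A \<alpha> y n j"
  unfolding vrrw_kernel_def using path_occ_cong[of n x y] by simp

text \<open>
  A state v with A v v = 0 is never repeated, so it occupies at most about half of the time;
  the remaining N - 1 states cannot all stay below n/(2N).
\<close>
lemma frequent_neighbour:
  assumes xr: "\<forall>k\<le>n. x k \<in> {1..N}"
    and loops: "\<forall>k<n. x (Suc k) = x k \<longrightarrow> A (x k) (x k) \<noteq> 0"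
    and n: "n \<ge> 1"
  obtains k where "k \<in> {1..N}" "A (x n) k > 0" "real (path_occ x n k) \<ge> real n / (2 * N)"
proof (rule ccontr)
  let ?v = "x n"
  have v: "?v \<in> {1..N}" using xr by auto
  assume "\<not> thesis"
  with that have small: "real (path_occ x n k) < real n / (2 * N)"
    if "k \<in> {1..N}" "A ?v k > 0" for k
    using that by force
  have rest: "real (path_occ x n k) \<le> real n / (2 * N)" if "k \<in> {1..N} - {?v}" for k
    using small A_offdiag_pos[OF v, of k] that by force
  have self: "2 * real (path_occ x n ?v) \<le> real n + 2"
  proof (cases "A ?v ?v > 0")
    case True
    then have "real (path_occ x n ?v) < real n / (2 * N)" using small v by blast
    also have "\<dots> \<le> real n / 2" using N_ge_2 by (intro divide_left_mono) auto
    finally show ?thesis by simp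
  next
    case False
    then have "\<forall>k<n. x (Suc k) = x k \<longrightarrow> x k \<noteq> ?v" using loops A_nonneg[OF v v] by auto
    from path_occ_without_loops[OF this] show ?thesis by simp
  qed
  have "real (Suc n) = real (\<Sum>j\<in>{1..N}. path_occ x n j)" using sum_path_occ[OF xr] by simp
  also have "\<dots> = real (path_occ x n ?v) + (\<Sum>j\<in>{1..N} - {?v}. real (path_occ x n j))"
    using v by (simp add: sum.remove)
  also have "(\<Sum>j\<in>{1..N} - {?v}. real (path_occ x n j)) \<le> (\<Sum>j\<in>{1..N} - {?v}. real n / (2 * N))"
    by (intro sum_mono rest)
  also have "\<dots> = real (N - 1) * (real n / (2 * N))" using v by simp
  also have "\<dots> < real n / 2" using N_ge_2 n by (simp add: field_simps of_nat_diff)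
  finally show False using self by simp
qed

lemma kernel_denom_lower:
  assumes "\<forall>k\<le>n. x k \<in> {1..N}"
    and "\<forall>k<n. x (Suc k) = x k \<longrightarrow> A (x k) (x k) \<noteq> 0"
    and "n \<ge> 1"
  shows "kernel_denom x n \<ge> A_min * (real n / (2 * N)) powr \<alpha>"
proof -
  have v: "x n \<in> {1..N}" using assms(1) by auto
  obtain k where k: "k \<in> {1..N}" "A (x n) k > 0" "real (path_occ x n k) \<ge> real n / (2 * N)"
    using frequent_neighbour[OF assms] .
  have "A_min * (real n / (2 * N)) powr \<alpha> \<le> A (x n) k * (1 + real (path_occ x n k)) powr \<alpha>"
    using A_min_pos k A_min_le[OF v k(1) k(2)] alpha_gt_1
    by (intro mult_mono powr_mono2) auto
  also have "\<dots> \<le> kernel_denom x n" unfolding kernel_denom_def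
    using k v A_nonneg by (intro member_le_sum) auto
  finally show ?thesis .
qed

definition C_step :: real where
  "C_step = A_max * 3 powr (\<alpha> - 1) * (2 * N) powr \<alpha> / A_min"

lemma C_step_nonneg: "C_step \<ge> 0"
  unfolding C_step_def using A_max_nonneg A_min_pos by auto

lemma vrrw_kernel_term_le:
  assumes "i \<in> {1..N}" "j \<in> {1..N}" "0 \<le> z" "z \<le> P"
  shows "A i j * (1 + z) powr \<alpha> \<le> A_max * (1 + P) powr (\<alpha> - 1) * (1 + z)"
proof -
  have "(1 + z) powr (\<alpha> - 1) \<le> (1 + P) powr (\<alpha> - 1)"
    using assms alpha_gt_1 by (intro powr_mono2) auto
  then have "A i j * (1 + z) powr (\<alpha> - 1) \<le> A_max * (1 + P) powr (\<alpha> - 1)"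
    using assms A_nonneg[of i j] A_max_ge[of i j] by (intro mult_mono) auto
  then have "A i j * (1 + z) powr (\<alpha> - 1) * (1 + z) \<le> A_max * (1 + P) powr (\<alpha> - 1) * (1 + z)"
    using assms(3) by (intro mult_right_mono) auto
  moreover have "(1 + z) powr \<alpha> = (1 + z) powr (\<alpha> - 1) * (1 + z)"
    using assms(3) by (simp add: powr_mult_base mult.commute)
  ultimately show ?thesis by (simp add: mult.assoc)
qed

lemma sum_vrrw_kernel_le:
  assumes xr: "\<forall>k\<le>n. x k \<in> {1..N}"
    and loops: "\<forall>k<n. x (Suc k) = x k \<longrightarrow> A (x k) (x k) \<noteq> 0"
    and n: "n \<ge> 1" and I: "I \<subseteq> {1..N}" and nu: "\<nu> \<le> 1"
    and occ: "\<forall>i\<in>I. real (path_occ x n i) \<le> 2 * real n powr (1 - \<nu>)"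
  shows "(\<Sum>j\<in>I. vrrw_kernel N A \<alpha> x n j)
         \<le> C_step * real n powr (-(1 + \<nu> * (\<alpha> - 1))) * (\<Sum>j\<in>I. 1 + real (path_occ x n j))"
proof -
  have v: "x n \<in> {1..N}" using xr by auto
  define P where "P = 2 * real n powr (1 - \<nu>)"
  define w where "w = (\<Sum>j\<in>I. 1 + real (path_occ x n j))"
  define S where "S = (\<Sum>j\<in>I. A (x n) j * (1 + real (path_occ x n j)) powr \<alpha>)"
  define d where "d = A_min * (real n / (2 * N)) powr \<alpha>"
  have n0: "real n > 0" using n by auto
  have "1 + P \<le> 3 * real n powr (1 - \<nu>)"
    unfolding P_def using n nu by (simp add: ge_one_powr_ge_zero)
  then have P_le: "(1 + P) powr (\<alpha> - 1) \<le> (3 * real n powr (1 - \<nu>)) powr (\<alpha> - 1)"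
    using alpha_gt_1 P_def by (intro powr_mono2) auto
  have S_le: "S \<le> A_max * (3 * real n powr (1 - \<nu>)) powr (\<alpha> - 1) * w"
    unfolding S_def w_def sum_distrib_left
  proof (intro sum_mono)
    fix j assume j: "j \<in> I"
    have "A (x n) j * (1 + real (path_occ x n j)) powr \<alpha>
        \<le> A_max * (1 + P) powr (\<alpha> - 1) * (1 + real (path_occ x n j))"
      using j I occ v unfolding P_def by (intro vrrw_kernel_term_le) auto
    also have "\<dots> \<le> A_max * (3 * real n powr (1 - \<nu>)) powr (\<alpha> - 1) * (1 + real (path_occ x n j))"
      using P_le A_max_nonneg by (intro mult_right_mono mult_left_mono) auto
    finally show "A (x n) j * (1 + real (path_occ x n j)) powr \<alpha>
        \<le> A_max * (3 * real n powr (1 - \<nu>)) powr (\<alpha> - 1) * (1 + real (path_occ x n j))" .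
  qed
  have S_nonneg: "0 \<le> S" unfolding S_def using A_nonneg v I by (intro sum_nonneg) auto
  have d_pos: "d > 0" unfolding d_def using A_min_pos n0 N_ge_2 by auto
  have "(\<Sum>j\<in>I. vrrw_kernel N A \<alpha> x n j) = S / kernel_denom x n"
    unfolding vrrw_kernel_eq S_def by (simp add: sum_divide_distrib)
  also have "\<dots> \<le> S / d"
    using S_nonneg d_pos kernel_denom_lower[OF xr loops n] unfolding d_def
    by (intro divide_left_mono) auto
  also have "\<dots> \<le> A_max * (3 * real n powr (1 - \<nu>)) powr (\<alpha> - 1) * w / d"
    using S_le d_pos by (intro divide_right_mono) auto
  also have "\<dots> = C_step * real n powr (-(1 + \<nu> * (\<alpha> - 1))) * w"
  proof -
    have "real n powr ((1 - \<nu>) * (\<alpha> - 1)) / real n powr \<alpha> = real n powr (-(1 + \<nu> * (\<alpha> - 1)))"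
      using n0 by (simp add: powr_diff[symmetric] algebra_simps)
    moreover have "(2 * real N) powr \<alpha> > 0" using N_ge_2 by auto
    ultimately show ?thesis unfolding d_def C_step_def using A_min_pos n0
      by (simp add: powr_mult powr_powr powr_divide field_simps)
  qed
  finally show ?thesis unfolding w_def .
qed

end


locale vrrw = vrrw_matrix N A \<alpha> + prob_space M
  for N A \<alpha> and M :: "'w measure" +
  fixes X :: "nat \<Rightarrow> 'w \<Rightarrow> nat"
  assumes X_measurable: "\<And>n. X n \<in> measurable M (count_space UNIV)"
    and X_range: "\<And>n \<omega>. \<omega> \<in> space M \<Longrightarrow> X n \<omega> \<in> {1..N}"
    and X_transition: "\<And>n (x :: nat \<Rightarrow> nat) j. (\<forall>k\<le>n. x k \<in> {1..N}) \<Longrightarrow> j \<in> {1..N} \<Longrightarrow>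
           measure M {\<omega> \<in> space M. (\<forall>k\<le>n. X k \<omega> = x k) \<and> X (Suc n) \<omega> = j}
         = measure M {\<omega> \<in> space M. \<forall>k\<le>n. X k \<omega> = x k} * vrrw_kernel N A \<alpha> x n j"
begin

definition cylinder :: "(nat \<Rightarrow> nat) \<Rightarrow> nat \<Rightarrow> 'w set" where
  "cylinder x n = {\<omega> \<in> space M. \<forall>k\<le>n. X k \<omega> = x k}"

definition path_prob :: "(nat \<Rightarrow> nat) \<Rightarrow> nat \<Rightarrow> real" where
  "path_prob x n = measure M (cylinder x n)"

definition paths :: "nat \<Rightarrow> (nat \<Rightarrow> nat) set" where
  "paths n = Pi\<^sub>E {..n} (\<lambda>_. {1..N})"

lemma cylinder_sets: "cylinder x n \<in> sets M"
proof -
  have "cylinder x n = (\<Inter>k\<in>{..n}. space M \<inter> X k -` {x k})" unfolding cylinder_def by auto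
  also have "\<dots> \<in> sets M"
    using measurable_sets[OF X_measurable] by (intro sets.finite_INT) (auto simp: Int_commute)
  finally show ?thesis .
qed

lemma finite_paths: "finite (paths n)"
  unfolding paths_def by (intro finite_PiE) auto

lemma path_prob_nonneg: "path_prob x n \<ge> 0"
  unfolding path_prob_def by simp

text \<open>An event depending only on X_0, ..., X_n is the disjoint union of the cylinders of its paths.\<close>
lemma path_event:
  assumes dep: "\<And>x y. \<forall>k\<le>n. x k = y k \<Longrightarrow> P x \<longleftrightarrow> P y"
  shows "{\<omega> \<in> space M. P (\<lambda>k. X k \<omega>)} \<in> sets M"
    and "measure M {\<omega> \<in> space M. P (\<lambda>k. X k \<omega>)} = (\<Sum>x\<in>paths n \<inter> {x. P x}. path_prob x n)"
proof -
  have eq: "{\<omega> \<in> space M. P (\<lambda>k. X k \<omega>)} = (\<Union>x\<in>paths n \<inter> {x. P x}. cylinder x n)"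
  proof (intro equalityI subsetI)
    fix \<omega> assume \<omega>: "\<omega> \<in> {\<omega> \<in> space M. P (\<lambda>k. X k \<omega>)}"
    define x where "x = restrict (\<lambda>k. X k \<omega>) {..n}"
    have "x \<in> paths n" using \<omega> X_range unfolding x_def paths_def by auto
    moreover have "P x" using \<omega> dep[of x "\<lambda>k. X k \<omega>"] unfolding x_def by auto
    moreover have "\<omega> \<in> cylinder x n" using \<omega> unfolding cylinder_def x_def by auto
    ultimately show "\<omega> \<in> (\<Union>x\<in>paths n \<inter> {x. P x}. cylinder x n)" by blast
  next
    fix \<omega> assume "\<omega> \<in> (\<Union>x\<in>paths n \<inter> {x. P x}. cylinder x n)"
    then obtain x where "P x" "\<omega> \<in> cylinder x n" by auto
    then show "\<omega> \<in> {\<omega> \<in> space M. P (\<lambda>k. X k \<omega>)}"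
      using dep[of x "\<lambda>k. X k \<omega>"] unfolding cylinder_def by auto
  qed
  have disj: "disjoint_family_on (\<lambda>x. cylinder x n) (paths n)"
    unfolding disjoint_family_on_def
  proof (intro ballI impI)
    fix x y assume xy: "x \<in> paths n" "y \<in> paths n" "x \<noteq> y"
    show "cylinder x n \<inter> cylinder y n = {}"
    proof (rule ccontr)
      assume "cylinder x n \<inter> cylinder y n \<noteq> {}"
      then have "\<forall>k\<le>n. x k = y k" unfolding cylinder_def by auto
      then have "x = y" using xy(1,2) unfolding paths_def by (intro PiE_ext) auto
      with xy(3) show False by simp
    qed
  qed
  show "{\<omega> \<in> space M. P (\<lambda>k. X k \<omega>)} \<in> sets M"
    unfolding eq using finite_paths cylinder_sets by (intro sets.finite_UN) auto
  show "measure M {\<omega> \<in> space M. P (\<lambda>k. X k \<omega>)} = (\<Sum>x\<in>paths n \<inter> {x. P x}. path_prob x n)"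
    unfolding eq path_prob_def using finite_paths cylinder_sets disjoint_family_on_mono[OF _ disj]
    by (intro finite_measure_finite_Union) auto
qed

lemma sum_path_prob_le_1: "(\<Sum>x\<in>paths n. path_prob x n) \<le> 1"
  using path_event(2)[of n "\<lambda>_. True"] prob_space by simp

lemma path_prob_Suc:
  "\<forall>k\<le>Suc n. x k \<in> {1..N} \<Longrightarrow>
    path_prob x (Suc n) = path_prob x n * vrrw_kernel N A \<alpha> x n (x (Suc n))"
  using X_transition[of n x "x (Suc n)"] unfolding path_prob_def cylinder_def
  by (simp add: le_Suc_eq conj_disj_distribL all_conj_distrib cong: rev_conj_cong)

lemma path_prob_extend:
  assumes "x \<in> paths n" "j \<in> {1..N}"
  shows "path_prob (x(Suc n := j)) (Suc n) = path_prob x n * vrrw_kernel N A \<alpha> x n j"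
proof -
  have "\<forall>k\<le>Suc n. (x(Suc n := j)) k \<in> {1..N}" using assms unfolding paths_def by auto
  moreover have "path_prob (x(Suc n := j)) n = path_prob x n"
    unfolding path_prob_def cylinder_def by auto
  moreover have "vrrw_kernel N A \<alpha> (x(Suc n := j)) n j = vrrw_kernel N A \<alpha> x n j"
    by (intro vrrw_kernel_cong) auto
  ultimately show ?thesis using path_prob_Suc[of n "x(Suc n := j)"] by simp
qed

lemma path_prob_antimono: "n \<le> n' \<Longrightarrow> path_prob x n' \<le> path_prob x n"
  unfolding path_prob_def cylinder_def
  by (rule finite_measure_mono[OF _ cylinder_sets[unfolded cylinder_def]]) auto

lemma positive_path_no_zero_loops:
  assumes xr: "\<forall>k\<le>n. x k \<in> {1..N}" and pos: "path_prob x n > 0"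
  shows "\<forall>k<n. x (Suc k) = x k \<longrightarrow> A (x k) (x k) \<noteq> 0"
proof (intro allI impI notI)
  fix k assume k: "k < n" "x (Suc k) = x k" "A (x k) (x k) = 0"
  have "path_prob x (Suc k) = path_prob x k * vrrw_kernel N A \<alpha> x k (x (Suc k))"
    using xr k by (intro path_prob_Suc) auto
  also have "vrrw_kernel N A \<alpha> x k (x (Suc k)) = 0" using k unfolding vrrw_kernel_def by simp
  finally have "path_prob x (Suc k) = 0" by simp
  moreover have "path_prob x n \<le> path_prob x (Suc k)" using k by (intro path_prob_antimono) auto
  ultimately show False using pos by simp
qed

lemma sum_paths_Suc:
  "(\<Sum>x'\<in>paths (Suc n). f x') = (\<Sum>x\<in>paths n. \<Sum>j\<in>{1..N}. f (x(Suc n := j)))"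
proof -
  have e: "paths (Suc n) = (\<lambda>(j, x). x(Suc n := j)) ` ({1..N} \<times> paths n)"
    unfolding paths_def by (simp add: atMost_Suc PiE_insert_eq)
  have i: "inj_on (\<lambda>(j, x). x(Suc n := j)) ({1..N} \<times> paths n)"
    unfolding paths_def by (rule inj_combinator) auto
  have "(\<Sum>x'\<in>paths (Suc n). f x') = (\<Sum>(j, x)\<in>{1..N} \<times> paths n. f (x(Suc n := j)))"
    unfolding e by (subst sum.reindex[OF i]) (simp add: case_prod_unfold)
  also have "\<dots> = (\<Sum>j\<in>{1..N}. \<Sum>x\<in>paths n. f (x(Suc n := j)))"
    by (simp add: sum.cartesian_product)
  also have "\<dots> = (\<Sum>x\<in>paths n. \<Sum>j\<in>{1..N}. f (x(Suc n := j)))"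
    by (rule sum.swap)
  finally show ?thesis .
qed

end


locale vrrw_avoid = vrrw N A \<alpha> M X for N A \<alpha> and M :: "'w measure" and X +
  fixes I :: "nat set" and \<nu> :: real
  assumes I_subset: "I \<subseteq> {1..N}" and nu_pos: "0 < \<nu>" and nu_less_1: "\<nu> < 1"
begin

definition low_occ :: "(nat \<Rightarrow> nat) \<Rightarrow> nat \<Rightarrow> bool" where
  "low_occ x k \<longleftrightarrow> (\<forall>i\<in>I. real (path_occ x k i) \<le> 2 * real k powr (1 - \<nu>))"

definition low_occ_upto :: "nat \<Rightarrow> (nat \<Rightarrow> nat) \<Rightarrow> nat \<Rightarrow> bool" where
  "low_occ_upto m x n \<longleftrightarrow> (\<forall>k. m \<le> k \<and> k \<le> n \<longrightarrow> low_occ x k)"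

definition weight :: "(nat \<Rightarrow> nat) \<Rightarrow> nat \<Rightarrow> real" where
  "weight x n = (\<Sum>i\<in>I. 1 + real (path_occ x n i))"

definition guarded_weight :: "nat \<Rightarrow> (nat \<Rightarrow> nat) \<Rightarrow> nat \<Rightarrow> real" where
  "guarded_weight m x n = (if low_occ_upto m x n then path_prob x n * weight x n else 0)"

definition expected_guarded_weight :: "nat \<Rightarrow> nat \<Rightarrow> real" where
  "expected_guarded_weight m n = (\<Sum>x\<in>paths n. guarded_weight m x n)"

definition rate :: "nat \<Rightarrow> real" where
  "rate n = C_step * real n powr (-(1 + \<nu> * (\<alpha> - 1)))"

definition weight_bound :: "nat \<Rightarrow> real" where
  "weight_bound m = real N * (real m + 2) * exp (suminf rate)"

definition heavy_event :: "nat \<Rightarrow> real \<Rightarrow> nat \<Rightarrow> 'w set" where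
  "heavy_event m K n =
     {\<omega> \<in> space M. low_occ_upto m (\<lambda>k. X k \<omega>) n \<and> K \<le> weight (\<lambda>k. X k \<omega>) n}"

definition bad_event :: "nat \<Rightarrow> 'w set" where
  "bad_event m = {\<omega> \<in> space M. (\<forall>k\<ge>m. low_occ (\<lambda>k. X k \<omega>) k) \<and>
                                 (\<forall>K::nat. \<exists>n. real K \<le> weight (\<lambda>k. X k \<omega>) n)}"

lemma finite_I: "finite I"
  using I_subset finite_subset by blast

lemma low_occ_cong: "\<forall>j\<le>k. x j = y j \<Longrightarrow> low_occ x k = low_occ y k"
  unfolding low_occ_def using path_occ_cong[of k x y] by simp

lemma low_occ_upto_cong: "\<forall>k\<le>n. x k = y k \<Longrightarrow> low_occ_upto m x n = low_occ_upto m y n"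
  unfolding low_occ_upto_def using low_occ_cong[of _ x y] by (meson order_trans)

lemma low_occ_upto_extend: "low_occ_upto m (x(Suc n := j)) (Suc n) \<Longrightarrow> low_occ_upto m x n"
  using low_occ_upto_cong[of n "x(Suc n := j)" x m] unfolding low_occ_upto_def by auto

lemma weight_cong: "\<forall>k\<le>n. x k = y k \<Longrightarrow> weight x n = weight y n"
  unfolding weight_def using path_occ_cong[of n x y] by simp

lemma weight_nonneg: "weight x n \<ge> 0"
  unfolding weight_def by (intro sum_nonneg) auto

lemma weight_mono: "n \<le> n' \<Longrightarrow> weight x n \<le> weight x n'"
  unfolding weight_def using path_occ_mono[of n n' x] by (intro sum_mono) auto

lemma weight_le: "weight x n \<le> real N * (real n + 2)"
proof -
  have "weight x n \<le> (\<Sum>i\<in>I. real n + 2)" unfolding weight_def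
  proof (rule sum_mono)
    fix i
    have "real (path_occ x n i) \<le> real (Suc n)"
      using path_occ_le[of x n i] by (simp only: of_nat_le_iff)
    then show "1 + real (path_occ x n i) \<le> real n + 2" by simp
  qed
  also have "\<dots> \<le> real N * (real n + 2)"
    using card_mono[OF _ I_subset] by (simp add: mult_right_mono)
  finally show ?thesis .
qed

lemma weight_extend: "weight (x(Suc n := j)) (Suc n) = weight x n + (if j \<in> I then 1 else 0)"
proof -
  have "real (path_occ (x(Suc n := j)) (Suc n) i) = real (path_occ x n i) + (if j = i then 1 else 0)"
    for i by (simp add: path_occ_Suc path_occ_cong[of n "x(Suc n := j)" x])
  then show ?thesis
    unfolding weight_def using finite_I by (simp add: sum.distrib sum.delta)
qed

lemma weight_unbounded:
  assumes "i \<in> I" "infinite {n. x n = i}"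
  shows "\<exists>n. real K \<le> weight x n"
proof -
  obtain n where "K \<le> path_occ x n i" using path_occ_unbounded[OF assms(2)] by blast
  then have "real K \<le> 1 + real (path_occ x n i)" by simp
  also have "\<dots> \<le> weight x n"
    unfolding weight_def using finite_I assms(1) by (intro member_le_sum) auto
  finally show ?thesis by blast
qed

lemma guarded_weight_nonneg: "guarded_weight m x n \<ge> 0"
  unfolding guarded_weight_def using path_prob_nonneg weight_nonneg by simp

lemma expected_weight_extend:
  assumes x: "x \<in> paths n"
  shows "(\<Sum>j\<in>{1..N}. path_prob (x(Suc n := j)) (Suc n) * weight (x(Suc n := j)) (Suc n))
       = path_prob x n * (weight x n + (\<Sum>j\<in>I. vrrw_kernel N A \<alpha> x n j))"
proof -
  let ?K = "vrrw_kernel N A \<alpha> x n"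
  have xn: "x n \<in> {1..N}" using x unfolding paths_def by auto
  have "(\<Sum>j\<in>{1..N}. path_prob (x(Suc n := j)) (Suc n) * weight (x(Suc n := j)) (Suc n))
      = (\<Sum>j\<in>{1..N}. path_prob x n * (weight x n * ?K j + (if j \<in> I then ?K j else 0)))"
    using path_prob_extend[OF x] weight_extend[of x n] by (intro sum.cong) (auto simp: algebra_simps)
  also have "\<dots> = path_prob x n * (weight x n * (\<Sum>j\<in>{1..N}. ?K j) + (\<Sum>j\<in>I. ?K j))"
    using Int_absorb1[OF I_subset]
    by (simp add: sum.distrib sum_distrib_left[symmetric] sum.inter_restrict[symmetric] Int_commute)
  finally show ?thesis using sum_vrrw_kernel[of x n] xn by simp
qed

lemma guarded_weight_extend:
  assumes x: "x \<in> paths n" and m: "1 \<le> m" "m \<le> n"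
  shows "(\<Sum>j\<in>{1..N}. guarded_weight m (x(Suc n := j)) (Suc n)) \<le> (1 + rate n) * guarded_weight m x n"
proof (cases "low_occ_upto m x n")
  case False
  then have "\<not> low_occ_upto m (x(Suc n := j)) (Suc n)" for j
    using low_occ_upto_extend by blast
  with False show ?thesis unfolding guarded_weight_def by simp
next
  case True
  have xr: "\<forall>k\<le>n. x k \<in> {1..N}" using x unfolding paths_def by auto
  let ?S = "\<Sum>j\<in>I. vrrw_kernel N A \<alpha> x n j"
  have "(\<Sum>j\<in>{1..N}. guarded_weight m (x(Suc n := j)) (Suc n))
      \<le> (\<Sum>j\<in>{1..N}. path_prob (x(Suc n := j)) (Suc n) * weight (x(Suc n := j)) (Suc n))"
    unfolding guarded_weight_def using path_prob_nonneg weight_nonneg by (intro sum_mono) auto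
  also have "\<dots> = path_prob x n * (weight x n + ?S)"
    by (rule expected_weight_extend[OF x])
  also have "\<dots> \<le> path_prob x n * (weight x n + rate n * weight x n)"
  proof (cases "path_prob x n = 0")
    case False
    then have pos: "path_prob x n > 0" using path_prob_nonneg[of x n] by auto
    have "low_occ x n" using True m unfolding low_occ_upto_def by auto
    then have "?S \<le> rate n * weight x n"
      unfolding rate_def weight_def low_occ_def
      using sum_vrrw_kernel_le[OF xr positive_path_no_zero_loops[OF xr pos] _ I_subset] m nu_less_1
      by simp
    then show ?thesis using pos by (intro mult_left_mono) auto
  qed simp
  also have "\<dots> = (1 + rate n) * guarded_weight m x n"
    using True unfolding guarded_weight_def by (simp add: algebra_simps)
  finally show ?thesis .
qed

lemma rate_nonneg: "rate n \<ge> 0"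
  unfolding rate_def using C_step_nonneg by simp

lemma summable_rate: "summable rate"
proof -
  have "summable (\<lambda>n. real n powr (-(1 + \<nu> * (\<alpha> - 1))))"
    using nu_pos alpha_gt_1 by (subst summable_real_powr_iff) auto
  then show ?thesis unfolding rate_def by (rule summable_mult)
qed

lemma expected_guarded_weight_nonneg: "expected_guarded_weight m n \<ge> 0"
  unfolding expected_guarded_weight_def by (intro sum_nonneg guarded_weight_nonneg)

lemma expected_guarded_weight_Suc:
  assumes "1 \<le> m" "m \<le> n"
  shows "expected_guarded_weight m (Suc n) \<le> (1 + rate n) * expected_guarded_weight m n"
proof -
  have "expected_guarded_weight m (Suc n)
      = (\<Sum>x\<in>paths n. \<Sum>j\<in>{1..N}. guarded_weight m (x(Suc n := j)) (Suc n))"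
    unfolding expected_guarded_weight_def by (rule sum_paths_Suc)
  also have "\<dots> \<le> (\<Sum>x\<in>paths n. (1 + rate n) * guarded_weight m x n)"
    using assms by (intro sum_mono guarded_weight_extend)
  finally show ?thesis unfolding expected_guarded_weight_def by (simp add: sum_distrib_left)
qed

lemma expected_guarded_weight_start: "expected_guarded_weight m m \<le> real N * (real m + 2)"
proof -
  have "expected_guarded_weight m m \<le> (\<Sum>x\<in>paths m. path_prob x m * (real N * (real m + 2)))"
    unfolding expected_guarded_weight_def guarded_weight_def
    using path_prob_nonneg weight_le weight_nonneg by (intro sum_mono) (auto intro: mult_left_mono)
  also have "\<dots> \<le> real N * (real m + 2)"
    using sum_path_prob_le_1[of m]
    by (simp add: sum_distrib_right[symmetric] mult_left_le_one_le sum_nonneg path_prob_nonneg)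
  finally show ?thesis .
qed

lemma expected_guarded_weight_le:
  assumes "1 \<le> m" "m \<le> n"
  shows "expected_guarded_weight m n \<le> weight_bound m"
proof -
  have "expected_guarded_weight m n \<le> expected_guarded_weight m m * exp (\<Sum>k\<in>{m..<n}. rate k)"
    using assms(2)
  proof (induction n rule: dec_induct)
    case (step n)
    have "expected_guarded_weight m (Suc n) \<le> (1 + rate n) * expected_guarded_weight m n"
      using expected_guarded_weight_Suc assms(1) step by simp
    also have "\<dots> \<le> exp (rate n) * (expected_guarded_weight m m * exp (\<Sum>k\<in>{m..<n}. rate k))"
      using step.IH expected_guarded_weight_nonneg[of m n] rate_nonneg[of n]
      by (intro mult_mono) auto
    also have "\<dots> = expected_guarded_weight m m * exp (\<Sum>k\<in>{m..<Suc n}. rate k)"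
      using step by (simp add: exp_add[symmetric] algebra_simps)
    finally show ?case .
  qed simp
  also have "\<dots> \<le> real N * (real m + 2) * exp (suminf rate)"
    using expected_guarded_weight_start expected_guarded_weight_nonneg rate_nonneg summable_rate
    by (intro mult_mono) (auto intro!: sum_le_suminf)
  finally show ?thesis unfolding weight_bound_def .
qed

lemma pred_low_occ: "Measurable.pred M (\<lambda>\<omega>. low_occ (\<lambda>k. X k \<omega>) n)"
  unfolding pred_def by (rule path_event(1)[of n]) (rule low_occ_cong)

lemma pred_weight_ge: "Measurable.pred M (\<lambda>\<omega>. K \<le> weight (\<lambda>k. X k \<omega>) n)"
  unfolding pred_def by (rule path_event(1)[of n]) (metis weight_cong)

lemma heavy_event_sets: "heavy_event m K n \<in> sets M"
  unfolding heavy_event_def by (rule path_event(1)[of n]) (metis low_occ_upto_cong weight_cong)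

lemma markov_heavy_event:
  assumes "1 \<le> m" "m \<le> n" and K: "K > 0"
  shows "measure M (heavy_event m K n) \<le> weight_bound m / K"
proof -
  let ?Q = "{x. low_occ_upto m x n \<and> K \<le> weight x n}"
  have "measure M (heavy_event m K n) = (\<Sum>x\<in>paths n \<inter> ?Q. path_prob x n)"
    unfolding heavy_event_def by (rule path_event(2)) (metis low_occ_upto_cong weight_cong)
  also have "\<dots> \<le> (\<Sum>x\<in>paths n \<inter> ?Q. guarded_weight m x n / K)"
  proof (intro sum_mono)
    fix x assume "x \<in> paths n \<inter> ?Q"
    then have "path_prob x n * K \<le> guarded_weight m x n"
      unfolding guarded_weight_def using path_prob_nonneg by (auto intro: mult_left_mono)
    then show "path_prob x n \<le> guarded_weight m x n / K" using K by (simp add: field_simps)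
  qed
  also have "\<dots> \<le> (\<Sum>x\<in>paths n. guarded_weight m x n / K)"
    using finite_paths K guarded_weight_nonneg by (intro sum_mono2) auto
  also have "\<dots> \<le> weight_bound m / K"
    using expected_guarded_weight_le[OF assms(1,2)] K
    unfolding expected_guarded_weight_def sum_divide_distrib[symmetric]
    by (intro divide_right_mono) auto
  finally show ?thesis .
qed

lemma bad_event_measure_le:
  assumes m: "1 \<le> m" and K: "K \<ge> 1"
  shows "measure M (bad_event m) \<le> weight_bound m / real K"
proof -
  define F where "F i = {\<omega> \<in> space M. (\<forall>k\<ge>m. low_occ (\<lambda>k. X k \<omega>) k) \<and>
                                        real K \<le> weight (\<lambda>k. X k \<omega>) (m + i)}" for i
  have F_sets: "F i \<in> sets M" for i
    unfolding F_def using pred_low_occ pred_weight_ge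
    by (intro predE pred_intros_logic pred_intros_countable) auto
  have "incseq F"
    unfolding incseq_def F_def using weight_mono by (auto intro: order_trans)
  then have lim: "(\<lambda>i. measure M (F i)) \<longlonglongrightarrow> measure M (\<Union>i. F i)"
    using F_sets by (intro finite_Lim_measure_incseq) auto
  have F_le: "measure M (F i) \<le> weight_bound m / real K" for i
  proof -
    have "F i \<subseteq> heavy_event m (real K) (m + i)"
      unfolding F_def heavy_event_def low_occ_upto_def by auto
    then have "measure M (F i) \<le> measure M (heavy_event m (real K) (m + i))"
      using heavy_event_sets by (rule finite_measure_mono)
    also have "\<dots> \<le> weight_bound m / real K"
      using K by (intro markov_heavy_event m) auto
    finally show ?thesis .
  qed
  have "bad_event m \<subseteq> (\<Union>i. F i)"
  proof
    fix \<omega> assume \<omega>: "\<omega> \<in> bad_event m"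
    then obtain n where n: "real K \<le> weight (\<lambda>k. X k \<omega>) n" unfolding bad_event_def by blast
    also have "\<dots> \<le> weight (\<lambda>k. X k \<omega>) (m + n)" by (rule weight_mono) simp
    finally show "\<omega> \<in> (\<Union>i. F i)" using \<omega> unfolding F_def bad_event_def by auto
  qed
  then have "measure M (bad_event m) \<le> measure M (\<Union>i. F i)"
    using F_sets by (intro finite_measure_mono) auto
  also have "\<dots> \<le> weight_bound m / real K"
    by (rule LIMSEQ_le_const2[OF lim]) (use F_le in auto)
  finally show ?thesis .
qed

lemma bad_event_null:
  assumes "1 \<le> m"
  shows "bad_event m \<in> null_sets M"
proof -
  have "bad_event m \<in> sets M"
    unfolding bad_event_def using pred_low_occ pred_weight_ge
    by (intro predE pred_intros_logic pred_intros_countable) auto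
  moreover have "measure M (bad_event m) \<le> 0"
    using bad_event_measure_le[OF assms]
    by (intro LIMSEQ_le_const[OF lim_const_over_n[of "weight_bound m"]]) (auto intro: exI[of _ 1])
  ultimately show ?thesis
    by (intro null_setsI) (simp add: emeasure_eq_measure measure_le_0_iff)
qed


lemma bad_event_of_infinite_visits:
  assumes \<omega>: "\<omega> \<in> space M" and infinite: "infinite {n. X n \<omega> \<in> I}"
    and lim: "\<forall>i\<in>I. (\<lambda>n. emp X n i \<omega> * real n powr \<nu>) \<longlonglongrightarrow> 0"
  obtains m where "m \<ge> 1" "\<omega> \<in> bad_event m"
proof -
  from lim have "\<forall>i\<in>I. (\<lambda>n. real (path_occ (\<lambda>k. X k \<omega>) n i) / real (n + 1) * real n powr \<nu>)
      \<longlonglongrightarrow> 0"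
    unfolding emp_eq_path_occ .
  then obtain m where m: "m \<ge> 1" and small: "\<And>k i. m \<le> k \<Longrightarrow> i \<in> I \<Longrightarrow>
      real (path_occ (\<lambda>k. X k \<omega>) k i) \<le> 2 * real k powr (1 - \<nu>)"
    by (rule path_occ_eventually_small[OF finite_I]) auto
  have "{n. X n \<omega> \<in> I} = (\<Union>i\<in>I. {n. X n \<omega> = i})" by auto
  with infinite finite_I obtain i where "i \<in> I" "infinite {n. X n \<omega> = i}" by auto
  then have "\<forall>K::nat. \<exists>n. real K \<le> weight (\<lambda>k. X k \<omega>) n"
    using weight_unbounded[of i "\<lambda>k. X k \<omega>"] by blast
  moreover have "\<forall>k\<ge>m. low_occ (\<lambda>k. X k \<omega>) k"
    unfolding low_occ_def using small by blast
  ultimately have "\<omega> \<in> bad_event m"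
    unfolding bad_event_def using \<omega> by blast
  with m show thesis by (rule that)
qed

end


theorem lemma3p14:
  fixes M :: "'w measure" and X :: "nat \<Rightarrow> 'w \<Rightarrow> nat"
    and N :: nat and A :: "nat \<Rightarrow> nat \<Rightarrow> real" and \<alpha> \<nu> :: real and I :: "nat set"
  assumes "prob_space M"
    and "N \<ge> 2" and "\<alpha> > 1"
    and "\<And>i j. i \<in> {1..N} \<Longrightarrow> j \<in> {1..N} \<Longrightarrow> A i j = A j i"
    and "\<And>i j. i \<in> {1..N} \<Longrightarrow> j \<in> {1..N} \<Longrightarrow> A i j \<ge> 0"
    and "\<And>i j. i \<in> {1..N} \<Longrightarrow> j \<in> {1..N} \<Longrightarrow> i \<noteq> j \<Longrightarrow> A i j > 0"
    and "\<And>i i'. i \<in> {1..N} \<Longrightarrow> i' \<in> {1..N} \<Longrightarrow>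
           (\<Sum>j\<in>{1..N}. A i j) = (\<Sum>j\<in>{1..N}. A i' j)"
    and "\<And>n. X n \<in> measurable M (count_space UNIV)"
    and "\<And>n \<omega>. \<omega> \<in> space M \<Longrightarrow> X n \<omega> \<in> {1..N}"
    and "\<And>n (x :: nat \<Rightarrow> nat) j. (\<forall>k\<le>n. x k \<in> {1..N}) \<Longrightarrow> j \<in> {1..N} \<Longrightarrow>
           measure M {\<omega> \<in> space M. (\<forall>k\<le>n. X k \<omega> = x k) \<and> X (Suc n) \<omega> = j}
         = measure M {\<omega> \<in> space M. \<forall>k\<le>n. X k \<omega> = x k} * vrrw_kernel N A \<alpha> x n j"
    and "I \<subseteq> {1..N}"
    and "0 < \<nu>" and "\<nu> < 1"
  shows "AE \<omega> in M.
           (\<forall>i\<in>I. (\<lambda>n. emp X n i \<omega> * real n powr \<nu>) \<longlonglongrightarrow> 0)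
           \<longrightarrow> finite {n. X n \<omega> \<in> I}"
proof -
  interpret vrrw_avoid N A \<alpha> M X I \<nu>
    by (intro vrrw_avoid.intro vrrw.intro vrrw_matrix.intro vrrw_axioms.intro
        vrrw_avoid_axioms.intro assms(1)) (rule assms; assumption)+
  show ?thesis
  proof (rule AE_I')
    show "(\<Union>m. bad_event (Suc m)) \<in> null_sets M"
      by (intro null_sets_UN bad_event_null) simp
  next
    show "{\<omega> \<in> space M. \<not> ((\<forall>i\<in>I. (\<lambda>n. emp X n i \<omega> * real n powr \<nu>) \<longlonglongrightarrow> 0) \<longrightarrow>
            finite {n. X n \<omega> \<in> I})} \<subseteq> (\<Union>m. bad_event (Suc m))"
    proof
      fix \<omega> assume "\<omega> \<in> {\<omega> \<in> space M. \<not> ((\<forall>i\<in>I. (\<lambda>n. emp X n i \<omega> * real n powr \<nu>) \<longlonglongrightarrow> 0) \<longrightarrow>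
            finite {n. X n \<omega> \<in> I})}"
      then obtain m where "m \<ge> 1" "\<omega> \<in> bad_event m"
        by (auto elim: bad_event_of_infinite_visits)
      then show "\<omega> \<in> (\<Union>m. bad_event (Suc m))"
        by (intro UN_I[of "m - 1"]) auto
    qed
  qed
qed

end
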